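(* Let $\Omega$ be a finite set and let $u,v \in \mathrm{Sym}(\Omega)$. Let $\Phi\subseteq \mathrm{fix}([u,v]) \cap \mathrm{supp}(u)$ and $\Psi \subseteq \mathrm{supp}(v u v^{-1})\cap \mathrm{supp}(u)$. Then $$|\mathrm{supp}([u,v])| \le 2|\mathrm{supp}(u)| - |\Phi| - |\Psi|.$$
   Context: Permutations act on the right, written $\alpha^{u}$, and products are composed left to right: $\alpha^{uv}=(\alpha^u)^v$. The commutator is $[u,v] = uvu^{-1}v^{-1}$. For a permutation $x$, $\mathrm{supp}(x)=\{\alpha\in\Omega \mid \alpha^x\neq\alpha\}$ and $\mathrm{fix}(x)=\{\alpha\in\Omega\mid \alpha^x=\alpha\}$. *)

theory Defs
  imports "HOL-Combinatorics.Permutations"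
begin

(* Permutations act on the right and are composed left to right:
   a^(uv) = (a^u)^v.  As HOL functions, the product uv is  v o u. *)

definition rmul :: "('a \<Rightarrow> 'a) \<Rightarrow> ('a \<Rightarrow> 'a) \<Rightarrow> ('a \<Rightarrow> 'a)" where
  "rmul u v = v \<circ> u"

definition comm :: "('a \<Rightarrow> 'a) \<Rightarrow> ('a \<Rightarrow> 'a) \<Rightarrow> ('a \<Rightarrow> 'a)" where
  "comm u v = rmul (rmul (rmul u v) (inv u)) (inv v)"

definition supp :: "'a set \<Rightarrow> ('a \<Rightarrow> 'a) \<Rightarrow> 'a set" where
  "supp \<Omega> x = {a \<in> \<Omega>. x a \<noteq> a}"

definition fixset :: "'a set \<Rightarrow> ('a \<Rightarrow> 'a) \<Rightarrow> 'a set" where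
  "fixset \<Omega> x = {a \<in> \<Omega>. x a = a}"

end

theory Submission
  imports Defs
begin

text \<open>Writing \<open>w = v u v\<^sup>-\<^sup>1\<close>, the commutator is \<open>[u,v] = u w\<^sup>-\<^sup>1\<close>, so its support lies in
  \<open>supp u \<union> supp w\<close> and misses \<open>\<Phi>\<close>. As a conjugate of \<open>u\<close>, \<open>w\<close> has a support of the same size
  as that of \<open>u\<close>, and the two supports overlap at least in \<open>\<Psi>\<close>; inclusion-exclusion gives the
  bound.\<close>

lemma supp_rmul_subset: "supp \<Omega> (rmul x y) \<subseteq> supp \<Omega> x \<union> supp \<Omega> y"
  by (auto simp: supp_def rmul_def)

lemma supp_inv:
  assumes "bij x"
  shows "supp \<Omega> (inv x) = supp \<Omega> x"
proof -
  have "inv x a = a \<longleftrightarrow> x a = a" for a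
    using bij_inv_eq_iff[OF assms, of a a] by auto
  then show ?thesis
    by (simp add: supp_def)
qed

lemma comm_eq_rmul_inv_conj:
  assumes "bij u" and "bij v"
  shows "comm u v = rmul u (inv (rmul (rmul v u) (inv v)))"
proof -
  have "inv (inv v \<circ> u \<circ> v) = inv v \<circ> inv u \<circ> v"
    using assms by (simp add: o_inv_distrib bij_imp_bij_inv inv_inv_eq bij_comp o_assoc)
  then show ?thesis
    by (simp add: comm_def rmul_def o_assoc)
qed

lemma supp_conj:
  assumes "v permutes \<Omega>"
  shows "supp \<Omega> (rmul (rmul v u) (inv v)) = inv v ` supp \<Omega> u"
proof -
  have "supp \<Omega> (rmul (rmul v u) (inv v)) = {a \<in> \<Omega>. u (v a) \<noteq> v a}"
    by (auto simp: supp_def rmul_def permutes_inv_eq[OF assms])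
  also have "\<dots> = v -` supp \<Omega> u"
    using assms by (auto simp: supp_def permutes_in_image)
  also have "\<dots> = inv v ` supp \<Omega> u"
    using assms by (simp add: permutes_bij bij_vimage_eq_inv_image)
  finally show ?thesis .
qed

lemma card_supp_conj:
  assumes "v permutes \<Omega>"
  shows "card (supp \<Omega> (rmul (rmul v u) (inv v))) = card (supp \<Omega> u)"
  unfolding supp_conj[OF assms]
  by (rule card_image[OF permutes_inj_on[OF permutes_inv[OF assms]]])

theorem lemma2p1:
  fixes \<Omega> :: "'a set" and u v :: "'a \<Rightarrow> 'a" and \<Phi> \<Psi> :: "'a set"
  assumes "finite \<Omega>"
    and "u permutes \<Omega>" and "v permutes \<Omega>"
    and "\<Phi> \<subseteq> fixset \<Omega> (comm u v) \<inter> supp \<Omega> u"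
    and "\<Psi> \<subseteq> supp \<Omega> (rmul (rmul v u) (inv v)) \<inter> supp \<Omega> u"
  shows "int (card (supp \<Omega> (comm u v)))
           \<le> 2 * int (card (supp \<Omega> u)) - int (card \<Phi>) - int (card \<Psi>)"
proof -
  define w where "w = rmul (rmul v u) (inv v)"
  define A where "A = supp \<Omega> u"
  define B where "B = supp \<Omega> w"
  have bij: "bij u" "bij v" "bij w"
    using assms(2,3) by (simp_all add: permutes_bij w_def rmul_def bij_comp bij_imp_bij_inv)
  have fin: "finite A" "finite B"
    using assms(1) by (simp_all add: A_def B_def supp_def)
  have "supp \<Omega> (comm u v) \<subseteq> A \<union> B"
    using supp_rmul_subset[of \<Omega> u "inv w"] comm_eq_rmul_inv_conj[OF bij(1,2)] supp_inv[OF bij(3)]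
    by (simp add: A_def B_def w_def)
  moreover have "\<Phi> \<subseteq> A" and "supp \<Omega> (comm u v) \<inter> \<Phi> = {}"
    using assms(4) by (auto simp: A_def supp_def fixset_def)
  ultimately have "card (supp \<Omega> (comm u v)) + card \<Phi> \<le> card (A \<union> B)"
    using fin by (subst card_Un_disjoint[symmetric]) (auto intro: card_mono finite_subset)
  moreover have "card \<Psi> \<le> card (A \<inter> B)"
    using assms(5) fin by (intro card_mono) (auto simp: A_def B_def w_def)
  moreover have "card (A \<union> B) + card (A \<inter> B) = card A + card B"
    using fin by (rule card_Un_Int[symmetric])
  moreover have "card B = card A"
    using assms(3) by (simp add: A_def B_def w_def card_supp_conj)
  ultimately show ?thesis
    by (simp add: A_def)
qed
end
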